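(* Let $V_1,V_2$ be finite-dimensional Euclidean vector spaces and let $F\in\Lambda^2(V_1\oplus V_2)\cong\mathfrak{so}(V_1\oplus V_2)$ be a nonzero 2-form which vanishes on $V_1\wedge V_1$ and on $V_2\wedge V_2$ (i.e. $F\in V_1\otimes V_2\subset\Lambda^2(V_1\oplus V_2)$). Let $\mathfrak{g}\subset\Lambda^2(V_1\oplus V_2)$ be the Lie algebra generated by the brackets $[F,X\wedge Y]$ with $X\in V_1$, $Y\in V_2$. Then $$\mathfrak{g}=\mathfrak{so}(V_1)\oplus\mathfrak{so}(V_2),$$ unless $\dim V_1=\dim V_2=2$.
   Context: 2-forms on the Euclidean space $V=V_1\oplus V_2$ (orthogonal sum) are identified with skew-symmetric endomorphisms via $(X\wedge Y)(Z)=\langle X,Z\rangle Y-\langle Y,Z\rangle X$, and the bracket is the commutator of endomorphisms. $\mathfrak{so}(V_1)\oplus\mathfrak{so}(V_2)$ denotes the subalgebra $\Lambda^2V_1\oplus\Lambda^2V_2\subset\Lambda^2(V_1\oplus V_2)$. *)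

theory Defs
  imports "HOL-Analysis.Analysis"
begin

text \<open>The Euclidean space V = V1 (+) V2 is modelled as real^('n + 'm) with the standard
inner product; V1 is the span of the Inl-coordinates, V2 that of the Inr-coordinates
(an orthogonal sum). 2-forms are skew-symmetric endomorphisms, represented as matrices.\<close>

definition V1 :: "(real ^ ('n::finite + 'm::finite)) set" where
  "V1 = {x. \<forall>i. x $ Inr i = 0}"

definition V2 :: "(real ^ ('n::finite + 'm::finite)) set" where
  "V2 = {x. \<forall>i. x $ Inl i = 0}"

text \<open>(X wedge Y)(Z) = <X,Z> Y - <Y,Z> X, as a matrix.\<close>
definition wedge :: "real ^ 'k \<Rightarrow> real ^ 'k \<Rightarrow> real ^ 'k ^ 'k" where
  "wedge X Y = (\<chi> i j. Y $ i * X $ j - X $ i * Y $ j)"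

definition skew :: "real ^ 'k ^ 'k \<Rightarrow> bool" where
  "skew A \<longleftrightarrow> transpose A = - A"

definition lie_bracket :: "real ^ 'k ^ 'k \<Rightarrow> real ^ 'k ^ 'k \<Rightarrow> real ^ 'k ^ 'k" where
  "lie_bracket A B = A ** B - B ** A"

definition lie_closed :: "(real ^ 'k ^ 'k) set \<Rightarrow> bool" where
  "lie_closed L \<longleftrightarrow> (\<forall>A\<in>L. \<forall>B\<in>L. lie_bracket A B \<in> L)"

definition lie_generated :: "(real ^ 'k ^ 'k) set \<Rightarrow> (real ^ 'k ^ 'k) set" where
  "lie_generated S = \<Inter>{L. subspace L \<and> lie_closed L \<and> S \<subseteq> L}"

text \<open>so(V1) (+) so(V2) = Lambda^2 V1 (+) Lambda^2 V2 inside Lambda^2 (V1 (+) V2).\<close>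
definition so_sum :: "(real ^ ('n::finite + 'm::finite) ^ ('n + 'm)) set" where
  "so_sum = span ({wedge X Y | X Y. X \<in> V1 \<and> Y \<in> V1} \<union> {wedge X Y | X Y. X \<in> V2 \<and> Y \<in> V2})"

end

theory Submission
  imports Defs
begin

text \<open>
  Since \<open>F\<close> swaps \<open>V\<^sub>1\<close> and \<open>V\<^sub>2\<close>, the generator \<open>[F, X \<and> Y] = X \<and> FY + FX \<and> Y\<close> lies in
  \<open>\<Lambda>\<^sup>2V\<^sub>1 \<oplus> \<Lambda>\<^sup>2V\<^sub>2\<close>, which is closed under brackets; this gives one inclusion.
  Conversely, \<open>F\<^sup>2\<close> restricted to \<open>V\<^sub>1\<close> is symmetric, negative semidefinite and nonzero, so it has an
  eigenvector \<open>x\<^sub>0\<close> with eigenvalue \<open>-\<mu> < 0\<close>, and \<open>Fx\<^sub>0\<close> is an eigenvector of \<open>F\<^sup>2\<close> on \<open>V\<^sub>2\<close>.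
  Once \<open>g\<close> contains \<open>x \<and> x\<^sub>0\<close> for all \<open>x \<perp> x\<^sub>0\<close> in \<open>V\<^sub>1\<close>, the brackets
  \<open>[x \<and> x\<^sub>0, y \<and> x\<^sub>0] = |x\<^sub>0|\<^sup>2 x \<and> y\<close> produce all of \<open>\<Lambda>\<^sup>2V\<^sub>1\<close>, and by the symmetry
  \<open>(V\<^sub>1, x\<^sub>0) \<leftrightarrow> (V\<^sub>2, Fx\<^sub>0)\<close> also all of \<open>\<Lambda>\<^sup>2V\<^sub>2\<close>. The generator for \<open>(x, Fx\<^sub>0)\<close> is
  \<open>Fx \<and> Fx\<^sub>0 - \<mu> x \<and> x\<^sub>0\<close>, so it remains to separate these two summands. Brackets of generators do
  this as soon as \<open>V\<^sub>1\<close> or \<open>V\<^sub>2\<close> has a third direction orthogonal to the vectors involved, which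
  fails exactly when \<open>dim V\<^sub>1 = dim V\<^sub>2 = 2\<close>.
\<close>

lemma wedge_apply: "wedge a b *v v = (a \<bullet> v) *\<^sub>R b - (b \<bullet> v) *\<^sub>R a"
  by (simp add: vec_eq_iff wedge_def matrix_vector_mult_def inner_vec_def sum_subtractf
      sum_distrib_left sum_distrib_right algebra_simps)

lemma wedge_add_left: "wedge (a + b) c = wedge a c + wedge b c"
  and wedge_add_right: "wedge a (b + c) = wedge a b + wedge a c"
  and wedge_diff_left: "wedge (a - b) c = wedge a c - wedge b c"
  and wedge_diff_right: "wedge a (b - c) = wedge a b - wedge a c"
  and wedge_scaleR_left: "wedge (r *\<^sub>R a) b = r *\<^sub>R wedge a b"
  and wedge_scaleR_right: "wedge a (r *\<^sub>R b) = r *\<^sub>R wedge a b"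
  and wedge_minus_left: "wedge (- a) b = - wedge a b"
  and wedge_minus_right: "wedge a (- b) = - wedge a b"
  by (simp_all add: vec_eq_iff wedge_def algebra_simps)

lemmas wedge_bilinear = wedge_add_left wedge_add_right wedge_diff_left wedge_diff_right
  wedge_scaleR_left wedge_scaleR_right wedge_minus_left wedge_minus_right

lemma wedge_zero_left [simp]: "wedge 0 b = 0"
  and wedge_zero_right [simp]: "wedge a 0 = 0"
  and wedge_self [simp]: "wedge a a = 0"
  by (simp_all add: vec_eq_iff wedge_def)

lemma wedge_commute: "wedge a b = - wedge b a"
  by (simp add: vec_eq_iff wedge_def)

lemma lie_bracket_add_left: "lie_bracket (A + B) C = lie_bracket A C + lie_bracket B C"
  and lie_bracket_add_right: "lie_bracket C (A + B) = lie_bracket C A + lie_bracket C B"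
  and lie_bracket_diff_left: "lie_bracket (A - B) C = lie_bracket A C - lie_bracket B C"
  and lie_bracket_diff_right: "lie_bracket C (A - B) = lie_bracket C A - lie_bracket C B"
  and lie_bracket_scaleR_left: "lie_bracket (r *\<^sub>R A) C = r *\<^sub>R lie_bracket A C"
  and lie_bracket_scaleR_right: "lie_bracket C (r *\<^sub>R A) = r *\<^sub>R lie_bracket C A"
  and lie_bracket_minus_right: "lie_bracket C (- A) = - lie_bracket C A"
  by (simp_all add: lie_bracket_def vec_eq_iff matrix_matrix_mult_def sum.distrib
      sum_subtractf sum_negf sum_distrib_left algebra_simps)

lemma lie_bracket_zero_left [simp]: "lie_bracket 0 A = 0"
  and lie_bracket_zero_right [simp]: "lie_bracket A 0 = 0"
  by (simp_all add: lie_bracket_def)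

lemmas lie_bracket_bilinear = lie_bracket_add_left lie_bracket_add_right
  lie_bracket_diff_left lie_bracket_diff_right lie_bracket_scaleR_left lie_bracket_scaleR_right

lemma skew_transpose_mult: "skew F \<Longrightarrow> transpose F *v x = - (F *v x)"
  by (simp add: skew_def matrix_vector_mult_def vec_eq_iff sum_negf)

lemma skew_inner: "skew F \<Longrightarrow> (F *v x) \<bullet> y = - (x \<bullet> (F *v y))"
  by (metis dot_lmul_matrix inner_commute inner_minus_right skew_transpose_mult transpose_matrix_vector)

lemma skew_wedge: "skew (wedge a b)"
  by (simp add: skew_def wedge_def transpose_def vec_eq_iff)

lemma skew_vector_matrix_mult: "skew F \<Longrightarrow> x v* F = - (F *v x)"
  by (metis skew_transpose_mult vector_transpose_matrix transpose_transpose)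

lemma lie_bracket_skew_wedge:
  assumes "skew F"
  shows "lie_bracket F (wedge x y) = wedge x (F *v y) + wedge (F *v x) y"
proof -
  have "F ** wedge x y = (\<chi> i j. (F *v y) $ i * x $ j - (F *v x) $ i * y $ j)"
    by (simp add: wedge_def vec_eq_iff matrix_matrix_mult_def matrix_vector_mult_def
        right_diff_distrib sum_subtractf sum_distrib_right mult.assoc mult.left_commute)
  moreover have "wedge x y ** F = (\<chi> i j. y $ i * (x v* F) $ j - x $ i * (y v* F) $ j)"
    by (simp add: wedge_def vec_eq_iff matrix_matrix_mult_def vector_matrix_mult_def
        left_diff_distrib sum_subtractf sum_distrib_left mult.assoc mult.left_commute)
  ultimately show ?thesis
    by (simp add: lie_bracket_def skew_vector_matrix_mult[OF assms] vec_eq_iff wedge_def algebra_simps)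
qed

lemma lie_bracket_wedge_wedge:
  "lie_bracket (wedge a b) (wedge c d) = (a \<bullet> d) *\<^sub>R wedge c b + (a \<bullet> c) *\<^sub>R wedge b d
     + (b \<bullet> d) *\<^sub>R wedge a c + (b \<bullet> c) *\<^sub>R wedge d a"
  using wedge_commute[of c a] wedge_commute[of a d]
  by (simp add: lie_bracket_skew_wedge[OF skew_wedge] wedge_apply wedge_bilinear algebra_simps)

lemma subspace_lie_generated: "subspace (lie_generated S)"
  unfolding lie_generated_def by (rule subspace_Inter) auto

lemma lie_closed_lie_generated: "lie_closed (lie_generated S)"
  unfolding lie_generated_def lie_closed_def by blast

lemma lie_generated_superset: "S \<subseteq> lie_generated S"
  unfolding lie_generated_def by blast

lemma lie_generated_minimal: "subspace L \<Longrightarrow> lie_closed L \<Longrightarrow> S \<subseteq> L \<Longrightarrow> lie_generated S \<subseteq> L"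
  unfolding lie_generated_def by blast

lemma lie_closed_span:
  assumes "\<And>A B. A \<in> W \<Longrightarrow> B \<in> W \<Longrightarrow> lie_bracket A B \<in> span W"
  shows "lie_closed (span W)"
proof -
  have left: "lie_bracket A B \<in> span W" if "A \<in> span W" "B \<in> W" for A B
    using that(1)
  proof (induction rule: span_induct)
    case base
    then show ?case
      by (auto simp: subspace_def lie_bracket_add_left lie_bracket_scaleR_left span_add span_scale span_zero)
  qed (use assms that(2) in blast)
  have "lie_bracket A B \<in> span W" if "A \<in> span W" "B \<in> span W" for A B
    using that(2)
  proof (induction rule: span_induct)
    case base
    then show ?case
      by (auto simp: subspace_def lie_bracket_add_right lie_bracket_scaleR_right span_add span_scale span_zero)
  qed (use left that(1) in blast)
  then show ?thesis
    unfolding lie_closed_def by blast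
qed

lemma subspace_scaleR_cancel: "subspace S \<Longrightarrow> c *\<^sub>R x \<in> S \<Longrightarrow> c \<noteq> 0 \<Longrightarrow> x \<in> S"
  using subspace_scale[of S "c *\<^sub>R x" "inverse c"] by simp

lemma wedge_mem_of_wedges_with:
  fixes U :: "(real ^ 'k) set" and g :: "(real ^ 'k ^ 'k) set"
  assumes U: "subspace U" and g: "subspace g" "lie_closed g" and e: "e \<in> U" "e \<noteq> 0"
    and wedge_e: "\<And>x. x \<in> U \<Longrightarrow> x \<bullet> e = 0 \<Longrightarrow> wedge x e \<in> g"
    and a: "a \<in> U" and b: "b \<in> U"
  shows "wedge a b \<in> g"
proof -
  have perp: "wedge x y \<in> g" if "x \<in> U" "y \<in> U" "x \<bullet> e = 0" "y \<bullet> e = 0" for x y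
  proof -
    have "lie_bracket (wedge x e) (wedge y e) = (e \<bullet> e) *\<^sub>R wedge x y"
      using that by (simp add: lie_bracket_wedge_wedge inner_commute)
    moreover have "lie_bracket (wedge x e) (wedge y e) \<in> g"
      using g(2) wedge_e that unfolding lie_closed_def by blast
    ultimately have "(e \<bullet> e) *\<^sub>R wedge x y \<in> g"
      by simp
    then show ?thesis
      by (rule subspace_scaleR_cancel[OF g(1)]) (use e(2) in simp)
  qed
  define a' b' where "a' = a - ((a \<bullet> e) / (e \<bullet> e)) *\<^sub>R e" and "b' = b - ((b \<bullet> e) / (e \<bullet> e)) *\<^sub>R e"
  have a': "a' \<in> U" "a' \<bullet> e = 0" and b': "b' \<in> U" "b' \<bullet> e = 0"
    using U a b e by (auto simp: a'_def b'_def subspace_diff subspace_scale inner_diff_left)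
  have "wedge a b = wedge a' b' + ((b \<bullet> e) / (e \<bullet> e)) *\<^sub>R wedge a' e - ((a \<bullet> e) / (e \<bullet> e)) *\<^sub>R wedge b' e"
    using wedge_commute[of e b'] by (simp add: a'_def b'_def wedge_bilinear algebra_simps)
  also have "\<dots> \<in> g"
    using perp[OF a'(1) b'(1) a'(2) b'(2)] wedge_e[OF a'] wedge_e[OF b'] g(1)
    by (intro subspace_add subspace_diff subspace_scale)
  finally show ?thesis .
qed

lemma exists_nonzero_orthogonal_pair:
  fixes U :: "'a::euclidean_space set"
  assumes U: "subspace U" and "a \<in> U" "b \<in> U" and dim: "3 \<le> dim U"
  obtains w where "w \<in> U" "w \<noteq> 0" "w \<bullet> a = 0" "w \<bullet> b = 0"
proof -
  let ?A = "span {a, b}"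
  have "?A \<subseteq> U"
    using assms by (simp add: span_minimal)
  then have "dim {y \<in> U. \<forall>x \<in> ?A. orthogonal x y} + dim ?A = dim U"
    by (rule dim_subspace_orthogonal_to_vectors[OF subspace_span U])
  moreover have "dim ?A \<le> card {a, b}"
    by (simp add: dim_le_card span_base subsetI)
  moreover have "card {a, b} \<le> 2"
    by (simp add: card_insert_if)
  ultimately have "dim {y \<in> U. \<forall>x \<in> ?A. orthogonal x y} \<noteq> 0"
    using dim by linarith
  then obtain w where "w \<in> U" "\<forall>x \<in> ?A. orthogonal x w" "w \<noteq> 0"
    by (auto simp: dim_eq_0)
  then show ?thesis
    by (intro that) (auto simp: orthogonal_def inner_commute span_base)
qed

lemma two_le_dim_of_orthogonal:
  fixes U :: "'a::euclidean_space set"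
  assumes "subspace U" "a \<in> U" "b \<in> U" "a \<noteq> 0" "b \<noteq> 0" "a \<bullet> b = 0"
  shows "2 \<le> dim U"
proof -
  have "independent {a, b}"
    using assms by (intro pairwise_orthogonal_independent) (auto simp: pairwise_def orthogonal_def inner_commute)
  then have "card {a, b} \<le> dim U"
    using assms independent_card_le_dim[of "{a, b}" U] by auto
  moreover have "a \<noteq> b"
    using assms by auto
  ultimately show ?thesis
    by simp
qed

lemma linear_coeff_zero_of_quadratic_nonpos:
  fixes c d :: real
  assumes "\<And>t. 2 * t * c + t\<^sup>2 * d \<le> 0"
  shows "c = 0"
proof -
  define s where "s = 1 + \<bar>d\<bar>"
  have s: "s > 0" "2 * s + d > 0"
    by (auto simp: s_def)
  have "2 * (c / s) * c + (c / s)\<^sup>2 * d = c\<^sup>2 * (2 * s + d) / s\<^sup>2"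
    using s by (simp add: field_simps power2_eq_square)
  then have "c\<^sup>2 * (2 * s + d) \<le> 0"
    using assms[of "c / s"] s by (simp add: divide_le_0_iff)
  then show "c = 0"
    using s by (simp add: mult_le_0_iff)
qed

lemma skew_square_eigenvector_of_maximizer:
  fixes F :: "real ^ 'k ^ 'k"
  assumes U: "subspace U" and sk: "skew F" and FFU: "\<And>x. x \<in> U \<Longrightarrow> F *v (F *v x) \<in> U"
    and x0: "x0 \<in> U" and bound: "\<And>x. x \<in> U \<Longrightarrow> (F *v x) \<bullet> (F *v x) \<le> \<mu> * (x \<bullet> x)"
    and attained: "(F *v x0) \<bullet> (F *v x0) = \<mu> * (x0 \<bullet> x0)"
  shows "F *v (F *v x0) = - \<mu> *\<^sub>R x0"
proof -
  define z where "z = F *v (F *v x0) + \<mu> *\<^sub>R x0"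
  have first_variation: "z \<bullet> v = 0" if v: "v \<in> U" for v
  proof -
    have "(F *v x0) \<bullet> (F *v v) - \<mu> * (x0 \<bullet> v) = 0"
    proof (rule linear_coeff_zero_of_quadratic_nonpos)
      fix t :: real
      have "x0 + t *\<^sub>R v \<in> U"
        using x0 v U by (simp add: subspace_add subspace_scale)
      from bound[OF this] attained
      show "2 * t * ((F *v x0) \<bullet> (F *v v) - \<mu> * (x0 \<bullet> v))
          + t\<^sup>2 * ((F *v v) \<bullet> (F *v v) - \<mu> * (v \<bullet> v)) \<le> 0"
        by (simp add: matrix_vector_right_distrib matrix_vector_mult_scaleR inner_add_left
            inner_add_right inner_commute power2_eq_square algebra_simps)
    qed
    then show ?thesis
      using skew_inner[OF sk, of "F *v x0" v] by (simp add: z_def inner_add_left)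
  qed
  have "z \<in> U"
    using FFU[OF x0] x0 U by (simp add: z_def subspace_add subspace_scale)
  then have "z = 0"
    using first_variation[of z] by simp
  then show ?thesis
    by (simp add: z_def eq_neg_iff_add_eq_0)
qed

lemma skew_square_eigenvector:
  fixes F :: "real ^ 'k ^ 'k"
  assumes U: "subspace U" and sk: "skew F" and FFU: "\<And>x. x \<in> U \<Longrightarrow> F *v (F *v x) \<in> U"
    and x1: "x1 \<in> U" "F *v x1 \<noteq> 0"
  obtains x0 \<mu> where "x0 \<in> U" "x0 \<noteq> 0" "\<mu> > 0" "F *v (F *v x0) = - \<mu> *\<^sub>R x0"
proof -
  define f where "f x = (F *v x) \<bullet> (F *v x)" for x
  have x1_nonzero: "x1 \<noteq> 0"
    using x1(2) by auto
  let ?S = "U \<inter> sphere 0 1"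
  have "compact ?S"
    using closed_subspace[OF U] compact_sphere by (rule closed_Int_compact)
  moreover have "x1 /\<^sub>R norm x1 \<in> ?S"
    using x1_nonzero x1(1) U by (simp add: subspace_scale)
  moreover have "continuous_on ?S f"
    unfolding f_def by (intro continuous_intros linear_continuous_on matrix_vector_mul_linear)
  ultimately obtain x0 where x0: "x0 \<in> ?S" and max: "\<And>y. y \<in> ?S \<Longrightarrow> f y \<le> f x0"
    using continuous_attains_sup[of ?S f] by blast
  have x0_unit: "x0 \<bullet> x0 = 1"
    using x0 by (simp add: dot_square_norm)
  have bound: "f x \<le> f x0 * (x \<bullet> x)" if "x \<in> U" for x
  proof (cases "x = 0")
    case False
    then have "f (x /\<^sub>R norm x) \<le> f x0"
      using that U by (intro max) (simp add: subspace_scale)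
    moreover have "f (x /\<^sub>R norm x) = f x / (x \<bullet> x)"
      by (simp add: f_def matrix_vector_mult_scaleR dot_square_norm power2_eq_square divide_inverse)
    ultimately show ?thesis
      using False by (simp add: divide_le_eq)
  qed (simp add: f_def)
  have "0 < f x1"
    using x1 by (simp add: f_def)
  also have "\<dots> \<le> f x0 * (x1 \<bullet> x1)"
    using bound x1 by blast
  finally have "0 < f x0 * (x1 \<bullet> x1)" .
  moreover have "0 < x1 \<bullet> x1"
    using x1_nonzero by simp
  ultimately have "0 < f x0"
    by (rule zero_less_mult_pos2)
  moreover have "F *v (F *v x0) = - f x0 *\<^sub>R x0"
    by (rule skew_square_eigenvector_of_maximizer[OF U sk FFU])
      (use x0 bound x0_unit in \<open>simp_all add: f_def\<close>)
  ultimately show ?thesis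
    using that[of x0 "f x0"] x0 by force
qed

text \<open>The hypotheses of the theorem for two arbitrary orthogonal subspaces, so that their roles can be
  exchanged (lemma \<open>swapped\<close>).\<close>

locale skew_swap =
  fixes F :: "real ^ 'k ^ 'k" and U1 U2 :: "(real ^ 'k) set" and g :: "(real ^ 'k ^ 'k) set"
  assumes subspace_U1: "subspace U1" and subspace_U2: "subspace U2"
    and orthogonal_U1_U2: "\<And>x y. x \<in> U1 \<Longrightarrow> y \<in> U2 \<Longrightarrow> x \<bullet> y = 0"
    and skew_F: "skew F"
    and F_U1: "\<And>x. x \<in> U1 \<Longrightarrow> F *v x \<in> U2"
    and F_U2: "\<And>y. y \<in> U2 \<Longrightarrow> F *v y \<in> U1"
    and subspace_g: "subspace g" and lie_closed_g: "lie_closed g"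
    and lie_bracket_F_mem: "\<And>x y. x \<in> U1 \<Longrightarrow> y \<in> U2 \<Longrightarrow> lie_bracket F (wedge x y) \<in> g"
begin

lemma swapped: "skew_swap F U2 U1 g"
proof
  show "y \<bullet> x = 0" if "y \<in> U2" "x \<in> U1" for x y
    using orthogonal_U1_U2[OF that(2,1)] by (simp add: inner_commute)
  show "lie_bracket F (wedge y x) \<in> g" if "y \<in> U2" "x \<in> U1" for x y
    using subspace_neg[OF subspace_g lie_bracket_F_mem[OF that(2,1)]]
    by (simp add: wedge_commute[of y] lie_bracket_minus_right)
qed (use subspace_U1 subspace_U2 skew_F F_U1 F_U2 subspace_g lie_closed_g in auto)

lemma generator_mem: "x \<in> U1 \<Longrightarrow> y \<in> U2 \<Longrightarrow> wedge x (F *v y) + wedge (F *v x) y \<in> g"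
  using lie_bracket_F_mem[of x y] by (simp add: lie_bracket_skew_wedge[OF skew_F])

lemma lie_bracket_mem: "A \<in> g \<Longrightarrow> B \<in> g \<Longrightarrow> lie_bracket A B \<in> g"
  using lie_closed_g by (simp add: lie_closed_def)

lemma add_mem: "A \<in> g \<Longrightarrow> B \<in> g \<Longrightarrow> A + B \<in> g"
  and diff_mem: "A \<in> g \<Longrightarrow> B \<in> g \<Longrightarrow> A - B \<in> g"
  using subspace_g by (simp_all add: subspace_add subspace_diff)

lemma scaleR_mem_cancel: "c *\<^sub>R A \<in> g \<Longrightarrow> c \<noteq> 0 \<Longrightarrow> A \<in> g"
  by (rule subspace_scaleR_cancel[OF subspace_g])

end

locale skew_swap_eigen = skew_swap +
  fixes x0 :: "real ^ 'k" and \<mu> :: real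
  assumes x0_U1: "x0 \<in> U1" and x0_nonzero: "x0 \<noteq> 0" and eigenvalue_pos: "\<mu> > 0"
    and FF_x0: "F *v (F *v x0) = - \<mu> *\<^sub>R x0"
begin

lemma Fx0_U2: "F *v x0 \<in> U2"
  using F_U1 x0_U1 by blast

lemma inner_Fx0_Fx0: "(F *v x0) \<bullet> (F *v x0) = \<mu> * (x0 \<bullet> x0)"
  using skew_inner[OF skew_F, of x0 "F *v x0"] by (simp add: FF_x0)

lemma Fx0_nonzero: "F *v x0 \<noteq> 0"
  using inner_Fx0_Fx0 eigenvalue_pos x0_nonzero by auto

lemma inner_F_Fx0: "x \<in> U1 \<Longrightarrow> x \<bullet> x0 = 0 \<Longrightarrow> (F *v x) \<bullet> (F *v x0) = 0"
  using skew_inner[OF skew_F, of x "F *v x0"] by (simp add: FF_x0)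

lemma inner_F_x0: "y \<in> U2 \<Longrightarrow> y \<bullet> (F *v x0) = 0 \<Longrightarrow> (F *v y) \<bullet> x0 = 0"
  using skew_inner[OF skew_F, of y x0] by simp

lemma swapped_eigen: "skew_swap_eigen F U2 U1 g (F *v x0) \<mu>"
proof (rule skew_swap_eigen.intro[OF swapped], unfold_locales)
  show "F *v x0 \<in> U2"
    by (rule Fx0_U2)
  show "F *v x0 \<noteq> 0"
    by (rule Fx0_nonzero)
  show "F *v (F *v (F *v x0)) = - \<mu> *\<^sub>R (F *v x0)"
    by (simp add: FF_x0 matrix_vector_mult_scaleR linear_neg[OF matrix_vector_mul_linear])
qed (rule eigenvalue_pos)

lemma eigen_generator_mem: "x \<in> U1 \<Longrightarrow> wedge (F *v x) (F *v x0) - \<mu> *\<^sub>R wedge x x0 \<in> g"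
  using generator_mem[OF _ Fx0_U2, of x] by (simp add: FF_x0 wedge_bilinear)

text \<open>The bracket of the generators for \<open>(x, Fx\<^sub>0)\<close> and \<open>(x\<^sub>0, y)\<close> is
  \<open>\<mu> |x\<^sub>0|\<^sup>2 (x \<and> Fy - Fx \<and> y)\<close>; together with the generator for \<open>(x, y)\<close> this separates its
  two summands.\<close>

lemma wedge_F_mem:
  assumes x: "x \<in> U1" "x \<bullet> x0 = 0" and y: "y \<in> U2" "y \<bullet> (F *v x0) = 0"
  shows "wedge x (F *v y) \<in> g"
proof -
  have FU: "F *v y \<in> U1" "F *v x \<in> U2"
    using x y F_U1 F_U2 by auto
  have orth: "u \<bullet> v = 0" "v \<bullet> u = 0" if "u \<in> {x, x0, F *v y}" "v \<in> {y, F *v x, F *v x0}" for u v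
    using that orthogonal_U1_U2 x y FU x0_U1 Fx0_U2 by (auto simp: inner_commute)
  have perp: "x0 \<bullet> x = 0" "x0 \<bullet> (F *v y) = 0" "(F *v x) \<bullet> (F *v x0) = 0" "(F *v x0) \<bullet> y = 0"
    using x y inner_F_Fx0 inner_F_x0 by (auto simp: inner_commute)
  have "lie_bracket (wedge (F *v x) (F *v x0) - \<mu> *\<^sub>R wedge x x0) (wedge x0 (F *v y) + wedge (F *v x0) y)
      \<in> g"
    by (intro lie_bracket_mem eigen_generator_mem generator_mem x y x0_U1)
  moreover have "lie_bracket (wedge (F *v x) (F *v x0) - \<mu> *\<^sub>R wedge x x0) (wedge x0 (F *v y) + wedge (F *v x0) y)
      = (\<mu> * (x0 \<bullet> x0)) *\<^sub>R (wedge x (F *v y) - wedge (F *v x) y)"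
    using wedge_commute[of y "F *v x"] wedge_commute[of "F *v y" x]
    by (simp add: lie_bracket_bilinear lie_bracket_wedge_wedge orth perp x(2) y(2) inner_Fx0_Fx0
        algebra_simps)
  ultimately have "(\<mu> * (x0 \<bullet> x0)) *\<^sub>R (wedge x (F *v y) - wedge (F *v x) y) \<in> g"
    by simp
  then have "wedge x (F *v y) - wedge (F *v x) y \<in> g"
    by (rule scaleR_mem_cancel) (use eigenvalue_pos x0_nonzero in simp)
  then have "(wedge x (F *v y) - wedge (F *v x) y) + (wedge x (F *v y) + wedge (F *v x) y) \<in> g"
    using generator_mem[OF x(1) y(1)] by (rule add_mem)
  then have "2 *\<^sub>R wedge x (F *v y) \<in> g"
    by (simp add: scaleR_2)
  then show ?thesis
    by (rule scaleR_mem_cancel) simp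
qed

text \<open>Inside \<open>x\<^sub>0\<^sup>\<bottom>\<close>, the vector \<open>u = F\<^sup>2x\<^sub>1\<close> is nonzero and \<open>z \<and> u \<in> g\<close> for all \<open>z\<close>
  by the previous lemma.\<close>

lemma wedge_perp_mem:
  assumes x1: "x1 \<in> U1" "x1 \<bullet> x0 = 0" "F *v x1 \<noteq> 0"
    and z: "z \<in> U1" "z \<bullet> x0 = 0" and z': "z' \<in> U1" "z' \<bullet> x0 = 0"
  shows "wedge z z' \<in> g"
proof -
  let ?P = "{z \<in> U1. z \<bullet> x0 = 0}"
  define u where "u = F *v (F *v x1)"
  have Fx1: "F *v x1 \<in> U2" "(F *v x1) \<bullet> (F *v x0) = 0"
    using F_U1 inner_F_Fx0 x1 by auto
  have "?P = U1 \<inter> {z. orthogonal x0 z}"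
    by (auto simp: orthogonal_def inner_commute)
  then have P: "subspace ?P"
    using subspace_inter[OF subspace_U1 subspace_orthogonal_to_vector] by simp
  have u: "u \<in> ?P"
    using F_U2 inner_F_x0 Fx1 by (simp add: u_def)
  have u_nonzero: "u \<noteq> 0"
  proof
    assume "u = 0"
    then have "(F *v x1) \<bullet> (F *v x1) = 0"
      using skew_inner[OF skew_F, of "F *v x1" x1] by (simp add: u_def inner_commute)
    then show False
      using x1(3) by simp
  qed
  have "wedge v u \<in> g" if "v \<in> ?P" for v
    using wedge_F_mem[of v "F *v x1"] that Fx1 by (simp add: u_def)
  then show ?thesis
    by (rule wedge_mem_of_wedges_with[OF P subspace_g lie_closed_g u u_nonzero]) (use z z' in auto)
qed

text \<open>With a third direction \<open>w \<perp> x, x\<^sub>0\<close>, the bracket of \<open>x \<and> w\<close> with the generator for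
  \<open>(w, Fx\<^sub>0)\<close> is \<open>\<mu> |w|\<^sup>2 x \<and> x\<^sub>0\<close>.\<close>

lemma wedge_x0_mem_of_dim_U1_ge_3:
  assumes x1: "x1 \<in> U1" "x1 \<bullet> x0 = 0" "F *v x1 \<noteq> 0" and dim: "3 \<le> dim U1"
    and x: "x \<in> U1" "x \<bullet> x0 = 0"
  shows "wedge x x0 \<in> g"
proof -
  obtain w where w: "w \<in> U1" "w \<noteq> 0" "w \<bullet> x0 = 0" "w \<bullet> x = 0"
    by (rule exists_nonzero_orthogonal_pair[OF subspace_U1 x0_U1 x(1) dim])
  have "lie_bracket (wedge x w) (wedge (F *v w) (F *v x0) - \<mu> *\<^sub>R wedge w x0) \<in> g"
    using wedge_perp_mem[OF x1 x w(1,3)] eigen_generator_mem[OF w(1)] by (rule lie_bracket_mem)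
  moreover have "lie_bracket (wedge x w) (wedge (F *v w) (F *v x0) - \<mu> *\<^sub>R wedge w x0)
      = (\<mu> * (w \<bullet> w)) *\<^sub>R wedge x x0"
    using orthogonal_U1_U2[OF x(1) F_U1[OF w(1)]] orthogonal_U1_U2[OF x(1) Fx0_U2]
      orthogonal_U1_U2[OF w(1) F_U1[OF w(1)]] orthogonal_U1_U2[OF w(1) Fx0_U2]
      x(2) w(3,4) wedge_commute[of x0 x]
    by (simp add: lie_bracket_bilinear lie_bracket_wedge_wedge inner_commute)
  ultimately have "(\<mu> * (w \<bullet> w)) *\<^sub>R wedge x x0 \<in> g"
    by simp
  then show ?thesis
    by (rule scaleR_mem_cancel) (use eigenvalue_pos w(2) in simp)
qed

lemma wedge_x0_mem_of_swapped:
  assumes swapped_mem: "\<And>y. y \<in> U2 \<Longrightarrow> y \<bullet> (F *v x0) = 0 \<Longrightarrow> wedge y (F *v x0) \<in> g"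
    and x: "x \<in> U1" "x \<bullet> x0 = 0"
  shows "wedge x x0 \<in> g"
proof -
  have "wedge (F *v x) (F *v x0) \<in> g"
    using F_U1 inner_F_Fx0 x by (intro swapped_mem)
  then have "wedge (F *v x) (F *v x0) - (wedge (F *v x) (F *v x0) - \<mu> *\<^sub>R wedge x x0) \<in> g"
    using eigen_generator_mem[OF x(1)] by (rule diff_mem)
  then have "\<mu> *\<^sub>R wedge x x0 \<in> g"
    by simp
  then show ?thesis
    by (rule scaleR_mem_cancel) (use eigenvalue_pos in simp)
qed

lemma two_le_dim_U1_U2:
  assumes x1: "x1 \<in> U1" "x1 \<bullet> x0 = 0" "F *v x1 \<noteq> 0"
  shows "2 \<le> dim U1" and "2 \<le> dim U2"
proof -
  have "x1 \<noteq> 0"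
    using x1(3) by auto
  then show "2 \<le> dim U1"
    using two_le_dim_of_orthogonal[OF subspace_U1 x0_U1 x1(1) x0_nonzero] x1(2)
    by (simp add: inner_commute)
  show "2 \<le> dim U2"
    using two_le_dim_of_orthogonal[OF subspace_U2 Fx0_U2 F_U1[OF x1(1)] Fx0_nonzero x1(3)]
      inner_F_Fx0[OF x1(1,2)]
    by (simp add: inner_commute)
qed

lemma wedge_x0_mem_of_dim_U2_ge_3:
  assumes x1: "x1 \<in> U1" "x1 \<bullet> x0 = 0" "F *v x1 \<noteq> 0" and dim: "3 \<le> dim U2"
    and x: "x \<in> U1" "x \<bullet> x0 = 0"
  shows "wedge x x0 \<in> g"
proof -
  interpret swapped: skew_swap_eigen F U2 U1 g "F *v x0" \<mu>
    by (rule swapped_eigen)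
  have FFx1: "F *v (F *v x1) \<noteq> 0"
    using skew_inner[OF skew_F, of "F *v x1" x1] x1(3) by auto
  have "wedge y (F *v x0) \<in> g" if "y \<in> U2" "y \<bullet> (F *v x0) = 0" for y
    by (rule swapped.wedge_x0_mem_of_dim_U1_ge_3[OF F_U1[OF x1(1)] inner_F_Fx0[OF x1(1,2)] FFx1 dim that])
  then show ?thesis
    by (rule wedge_x0_mem_of_swapped[OF _ x])
qed

lemma wedge_x0_mem:
  assumes dims: "\<not> (dim U1 = 2 \<and> dim U2 = 2)" and x: "x \<in> U1" "x \<bullet> x0 = 0"
  shows "wedge x x0 \<in> g"
proof (cases "\<exists>x1 \<in> U1. x1 \<bullet> x0 = 0 \<and> F *v x1 \<noteq> 0")
  case False
  then have "F *v x = 0"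
    using x by blast
  then have "(- \<mu>) *\<^sub>R wedge x x0 \<in> g"
    using eigen_generator_mem[OF x(1)] by simp
  then show ?thesis
    by (rule scaleR_mem_cancel) (use eigenvalue_pos in simp)
next
  case True
  then obtain x1 where x1: "x1 \<in> U1" "x1 \<bullet> x0 = 0" "F *v x1 \<noteq> 0"
    by blast
  then have "3 \<le> dim U1 \<or> 3 \<le> dim U2"
    using two_le_dim_U1_U2 dims by fastforce
  then show ?thesis
  proof
    assume "3 \<le> dim U1"
    then show ?thesis
      by (rule wedge_x0_mem_of_dim_U1_ge_3[OF x1 _ x])
  next
    assume "3 \<le> dim U2"
    then show ?thesis
      by (rule wedge_x0_mem_of_dim_U2_ge_3[OF x1 _ x])
  qed
qed

lemma wedge_U1_mem:
  assumes "\<not> (dim U1 = 2 \<and> dim U2 = 2)" and "a \<in> U1" "b \<in> U1"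
  shows "wedge a b \<in> g"
  by (rule wedge_mem_of_wedges_with[OF subspace_U1 subspace_g lie_closed_g x0_U1 x0_nonzero
        wedge_x0_mem[OF assms(1)] assms(2,3)])

lemma wedge_U2_mem:
  assumes "\<not> (dim U1 = 2 \<and> dim U2 = 2)" and "a \<in> U2" "b \<in> U2"
  shows "wedge a b \<in> g"
  using skew_swap_eigen.wedge_U1_mem[OF swapped_eigen] assms by auto

end

lemma subspace_V1: "subspace V1"
  and subspace_V2: "subspace V2"
  by (auto simp: subspace_def V1_def V2_def)

lemma V1_V2_orthogonal:
  assumes "x \<in> V1" "y \<in> V2"
  shows "x \<bullet> y = 0"
proof -
  have "x $ i * y $ i = 0" for i
    using assms by (cases i) (auto simp: V1_def V2_def)
  then show ?thesis
    by (simp add: inner_vec_def sum.neutral)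
qed

lemma V2_V1_orthogonal: "x \<in> V2 \<Longrightarrow> y \<in> V1 \<Longrightarrow> x \<bullet> y = 0"
  using V1_V2_orthogonal by (metis inner_commute)

lemma in_V1_iff_orthogonal_V2: "x \<in> V1 \<longleftrightarrow> (\<forall>y\<in>V2. x \<bullet> y = 0)"
proof
  show "x \<in> V1 \<Longrightarrow> \<forall>y\<in>V2. x \<bullet> y = 0"
    using V1_V2_orthogonal by blast
  assume orth: "\<forall>y\<in>V2. x \<bullet> y = 0"
  have "x $ Inr i = 0" for i
  proof -
    have "axis (Inr i) 1 \<in> V2"
      by (simp add: V2_def axis_def)
    then show ?thesis
      using orth by (auto simp: inner_axis)
  qed
  then show "x \<in> V1"
    by (simp add: V1_def)
qed

lemma in_V2_iff_orthogonal_V1: "x \<in> V2 \<longleftrightarrow> (\<forall>y\<in>V1. x \<bullet> y = 0)"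
proof
  show "x \<in> V2 \<Longrightarrow> \<forall>y\<in>V1. x \<bullet> y = 0"
    using V2_V1_orthogonal by blast
  assume orth: "\<forall>y\<in>V1. x \<bullet> y = 0"
  have "x $ Inl i = 0" for i
  proof -
    have "axis (Inl i) 1 \<in> V1"
      by (simp add: V1_def axis_def)
    then show ?thesis
      using orth by (auto simp: inner_axis)
  qed
  then show "x \<in> V2"
    by (simp add: V2_def)
qed

lemma V1_V2_decompose:
  fixes x :: "real ^ ('n::finite + 'm::finite)"
  obtains x1 x2 where "x1 \<in> V1" "x2 \<in> V2" "x = x1 + x2"
proof -
  define x1 :: "real ^ ('n + 'm)" where "x1 = (\<chi> i. case i of Inl _ \<Rightarrow> x $ i | Inr _ \<Rightarrow> 0)"
  have "x1 \<in> V1" "x - x1 \<in> V2"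
    by (auto simp: V1_def V2_def x1_def)
  then show ?thesis
    using that[of x1 "x - x1"] by simp
qed

lemma skew_nonzero_on_V1:
  fixes F :: "real ^ ('n::finite + 'm::finite) ^ ('n + 'm)"
  assumes sk: "skew F" and "F \<noteq> 0" and F_V2: "\<And>y. y \<in> V2 \<Longrightarrow> F *v y \<in> V1"
  obtains x where "x \<in> V1" "F *v x \<noteq> 0"
proof -
  have "\<exists>x\<in>V1. F *v x \<noteq> 0"
  proof (rule ccontr)
    assume "\<not> (\<exists>x\<in>V1. F *v x \<noteq> 0)"
    then have F_V1: "F *v x = 0" if "x \<in> V1" for x
      using that by blast
    have F_V2_zero: "F *v y = 0" if "y \<in> V2" for y
      using skew_inner[OF sk, of y "F *v y"] F_V1[OF F_V2[OF that]] by simp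
    have "F *v x = 0 *v x" for x
    proof -
      obtain x1 x2 where "x1 \<in> V1" "x2 \<in> V2" "x = x1 + x2"
        by (rule V1_V2_decompose)
      then show ?thesis
        by (simp add: matrix_vector_right_distrib F_V1 F_V2_zero)
    qed
    then have "F = 0"
      by (simp add: matrix_eq)
    with \<open>F \<noteq> 0\<close> show False ..
  qed
  then show ?thesis
    using that by blast
qed

lemma lie_bracket_wedge_mem_span_wedges:
  assumes "a \<in> U" "b \<in> U" "c \<in> U" "d \<in> U"
  shows "lie_bracket (wedge a b) (wedge c d) \<in> span {wedge x y | x y. x \<in> U \<and> y \<in> U}"
  unfolding lie_bracket_wedge_wedge
  using assms by (intro span_add span_scale span_base) blast+

lemma lie_closed_so_sum: "lie_closed (so_sum :: (real ^ ('n::finite + 'm::finite) ^ ('n + 'm)) set)"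
  unfolding so_sum_def
proof (rule lie_closed_span)
  let ?W1 = "{wedge x y | x y. x \<in> (V1 :: (real ^ ('n + 'm)) set) \<and> y \<in> V1}"
  let ?W2 = "{wedge x y | x y. x \<in> (V2 :: (real ^ ('n + 'm)) set) \<and> y \<in> V2}"
  fix A B
  assume "A \<in> ?W1 \<union> ?W2" "B \<in> ?W1 \<union> ?W2"
  then obtain a b c d where AB: "A = wedge a b" "B = wedge c d"
    and ab: "a \<in> V1 \<and> b \<in> V1 \<or> a \<in> V2 \<and> b \<in> V2" and cd: "c \<in> V1 \<and> d \<in> V1 \<or> c \<in> V2 \<and> d \<in> V2"
    by blast
  consider "a \<in> V1" "b \<in> V1" "c \<in> V1" "d \<in> V1" | "a \<in> V2" "b \<in> V2" "c \<in> V2" "d \<in> V2"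
    | "a \<bullet> d = 0" "a \<bullet> c = 0" "b \<bullet> d = 0" "b \<bullet> c = 0"
    using ab cd by (auto simp: V1_V2_orthogonal V2_V1_orthogonal)
  then show "lie_bracket A B \<in> span (?W1 \<union> ?W2)"
  proof cases
    case 1
    then have "lie_bracket A B \<in> span ?W1"
      unfolding AB by (rule lie_bracket_wedge_mem_span_wedges)
    then show ?thesis
      by (meson span_mono Un_upper1 subsetD)
  next
    case 2
    then have "lie_bracket A B \<in> span ?W2"
      unfolding AB by (rule lie_bracket_wedge_mem_span_wedges)
    then show ?thesis
      by (meson span_mono Un_upper2 subsetD)
  next
    case 3
    then show ?thesis
      unfolding AB by (simp add: lie_bracket_wedge_wedge span_zero)
  qed
qed

lemma lie_generated_subset_so_sum:
  fixes F :: "real ^ ('n::finite + 'm::finite) ^ ('n + 'm)"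
  assumes sk: "skew F" and F_V1: "\<And>x. x \<in> V1 \<Longrightarrow> F *v x \<in> V2" and F_V2: "\<And>y. y \<in> V2 \<Longrightarrow> F *v y \<in> V1"
  shows "lie_generated {lie_bracket F (wedge x y) | x y. x \<in> V1 \<and> y \<in> V2} \<subseteq> so_sum"
proof (rule lie_generated_minimal)
  show "subspace (so_sum :: (real ^ ('n + 'm) ^ ('n + 'm)) set)"
    unfolding so_sum_def by (rule subspace_span)
  show "lie_closed (so_sum :: (real ^ ('n + 'm) ^ ('n + 'm)) set)"
    by (rule lie_closed_so_sum)
  show "{lie_bracket F (wedge x y) | x y. x \<in> V1 \<and> y \<in> V2} \<subseteq> so_sum"
  proof safe
    fix x y :: "real ^ ('n + 'm)"
    assume "x \<in> V1" "y \<in> V2"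
    then show "lie_bracket F (wedge x y) \<in> so_sum"
      unfolding so_sum_def lie_bracket_skew_wedge[OF sk]
      by (intro span_add span_base) (blast intro: F_V1 F_V2)+
  qed
qed

theorem mainTheorem3:
  fixes F :: "real ^ ('n::finite + 'm::finite) ^ ('n + 'm)"
  assumes "skew F"
    and "F \<noteq> 0"
    and "\<forall>X Y. X \<in> (V1 :: (real ^ ('n + 'm)) set) \<longrightarrow> Y \<in> V1 \<longrightarrow> (F *v X) \<bullet> Y = 0"
    and "\<forall>X Y. X \<in> (V2 :: (real ^ ('n + 'm)) set) \<longrightarrow> Y \<in> V2 \<longrightarrow> (F *v X) \<bullet> Y = 0"
    and "\<not> (dim (V1 :: (real ^ ('n + 'm)) set) = 2 \<and> dim (V2 :: (real ^ ('n + 'm)) set) = 2)"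
  shows "lie_generated {lie_bracket F (wedge X Y) | X Y. X \<in> V1 \<and> Y \<in> V2}
           = (so_sum :: (real ^ ('n + 'm) ^ ('n + 'm)) set)"
proof -
  let ?g = "lie_generated {lie_bracket F (wedge X Y) | X Y. X \<in> (V1 :: (real ^ ('n + 'm)) set) \<and> Y \<in> V2}"
  have F_V1: "F *v x \<in> V2" if "x \<in> V1" for x
    using assms(3) that by (simp add: in_V2_iff_orthogonal_V1)
  have F_V2: "F *v y \<in> V1" if "y \<in> V2" for y
    using assms(4) that by (simp add: in_V1_iff_orthogonal_V2)
  interpret skew_swap F V1 V2 ?g
  proof
    show "lie_bracket F (wedge x y) \<in> ?g" if "x \<in> V1" "y \<in> V2" for x y
      using that by (intro subsetD[OF lie_generated_superset]) blast
  qed (use subspace_V1 subspace_V2 V1_V2_orthogonal assms(1) F_V1 F_V2 subspace_lie_generated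
      lie_closed_lie_generated in auto)
  obtain x1 where x1: "x1 \<in> V1" "F *v x1 \<noteq> 0"
    by (rule skew_nonzero_on_V1[OF assms(1,2) F_V2])
  have "F *v (F *v x) \<in> V1" if "x \<in> V1" for x
    using F_V1 F_V2 that by blast
  then obtain x0 \<mu> where "x0 \<in> V1" "x0 \<noteq> 0" "\<mu> > 0" "F *v (F *v x0) = - \<mu> *\<^sub>R x0"
    by (rule skew_square_eigenvector[OF subspace_V1 assms(1) _ x1])
  then interpret skew_swap_eigen F V1 V2 ?g x0 \<mu>
    by unfold_locales
  have "so_sum \<subseteq> ?g"
    unfolding so_sum_def
    by (rule span_minimal[OF _ subspace_g]) (use wedge_U1_mem[OF assms(5)] wedge_U2_mem[OF assms(5)] in blast)
  then show ?thesis
    using lie_generated_subset_so_sum[OF assms(1) F_V1 F_V2] by blast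
qed

end
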